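(* Fix nonnegative integers $k,\ell$. Let $\mathbf{P}:(\mathbb{Z}/2\mathbb{Z})^k\to\mathbb{R}[x]$ and $\mathbf{Q}:(\mathbb{Z}/2\mathbb{Z})^\ell\to\mathbb{R}[x]$, and define $\mathbf{S}:(\mathbb{Z}/2\mathbb{Z})^{k+\ell}\to\mathbb{R}[x]$ by $S_{\alpha\beta}=P_\alpha Q_\beta$ for $\alpha\in(\mathbb{Z}/2\mathbb{Z})^k$, $\beta\in(\mathbb{Z}/2\mathbb{Z})^\ell$. If $\mathbf{P}$ is an interpolatory $k$-cube and $\mathbf{Q}$ is an interpolatory $\ell$-cube, then $\mathbf{S}$ is an interpolatory $(k+\ell)$-cube.
   Context: Elements of $(\mathbb{Z}/2\mathbb{Z})^k$ are strings $\alpha=\alpha_1\cdots\alpha_k$, and $\eta(i)$ has a single $1$ in coordinate $i$. Interpolation operators. For $\lambda,\rho\ge0$, ${}_1\mathrm{I}^\rho_\lambda$ maps $\mathbf{P}:(\mathbb{Z}/2\mathbb{Z})^k\to\mathbb{R}[x]$ to $\mathbf{Q}:(\mathbb{Z}/2\mathbb{Z})^{k-1}\to\mathbb{R}[x]$ with $Q_\alpha=\lambda P_{1\alpha}+\rho P_{0\alpha}$. For $k$-tuples $\lambda=(\lambda_1,\ldots,\lambda_k)$ and $\rho=(\rho_1,\ldots,\rho_k)$ of nonnegative reals, $\mathbb{I}^\rho_\lambda={}_1\mathrm{I}^{\rho_k}_{\lambda_k}\cdots{}_1\mathrm{I}^{\rho_1}_{\lambda_1}$, which yields a single polynomial. Flip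 operators. $(\Phi_i\mathbf{P})_\alpha=xP_{\alpha+\eta(i)}$ if $\alpha_i=0$, and $=P_{\alpha+\eta(i)}$ if $\alpha_i=1$. For $S\subseteq\{1,\ldots,k\}$, $\Phi_S=\prod_{i\in S}\Phi_i$. Interpolatory $k$-cubes. $\mathbf{P}$ is an interpolatory $k$-cube if, for all $k$-tuples $\lambda,\rho$ of positive reals and all $S\subseteq\{1,\ldots,k\}$, $\mathbb{I}^\rho_\lambda\Phi_S\mathbf{P}$ is standard and has only nonpositive zeros. For $k=0$ this means the single polynomial is standard with only nonpositive zeros. Standard means $\equiv0$ or positive leading coefficient. Only nonpositive zeros means $\equiv0$ or all zeros real and $\le0$. *)

theory Defs
  imports "HOL-Computational_Algebra.Polynomial" Complex_Main
begin

text \<open>A map (Z/2Z)^k -> R[x] is modelled as a function on bool lists; only lists of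
  length k matter. True = 1, False = 0. Coordinates are 0-indexed (i = 0..k-1).\<close>

type_synonym cube = "bool list \<Rightarrow> real poly"

definition interp1 :: "real \<Rightarrow> real \<Rightarrow> cube \<Rightarrow> cube" where
  "interp1 lam rho P = (\<lambda>\<alpha>. smult lam (P (True # \<alpha>)) + smult rho (P (False # \<alpha>)))"

text \<open>interp [l1..lk] [r1..rk] = 1I^{rk}_{lk} o ... o 1I^{r1}_{l1} (l1,r1 applied first).\<close>
fun interp :: "real list \<Rightarrow> real list \<Rightarrow> cube \<Rightarrow> cube" where
  "interp (l # ls) (r # rs) P = interp ls rs (interp1 l r P)"
| "interp _ _ P = P"

definition flip :: "nat \<Rightarrow> cube \<Rightarrow> cube" where
  "flip i P = (\<lambda>\<alpha>. if \<not> \<alpha> ! i then [:0, 1:] * P (\<alpha>[i := \<not> \<alpha> ! i])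
                    else P (\<alpha>[i := \<not> \<alpha> ! i]))"

definition flipS :: "nat set \<Rightarrow> cube \<Rightarrow> cube" where
  "flipS S P = fold flip (sorted_list_of_set S) P"

definition standard :: "real poly \<Rightarrow> bool" where
  "standard p \<longleftrightarrow> p = 0 \<or> lead_coeff p > 0"

definition nonpos_zeros :: "real poly \<Rightarrow> bool" where
  "nonpos_zeros p \<longleftrightarrow> p = 0 \<or>
     (\<forall>z::complex. poly (map_poly of_real p) z = 0 \<longrightarrow> Im z = 0 \<and> Re z \<le> 0)"

definition interpolatory_cube :: "nat \<Rightarrow> cube \<Rightarrow> bool" where
  "interpolatory_cube k P \<longleftrightarrow>
     (\<forall>lam rho S. length lam = k \<and> length rho = k \<and> (\<forall>x\<in>set lam. x > 0) \<and>
        (\<forall>x\<in>set rho. x > 0) \<and> S \<subseteq> {..<k} \<longrightarrow>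
        standard (interp lam rho (flipS S P) []) \<and>
        nonpos_zeros (interp lam rho (flipS S P) []))"

end

theory Submission
  imports Defs
begin

text \<open>Flips at coordinates below \<open>k\<close> act only on the \<open>P\<close>-factor of \<open>S\<close>, flips at the
  other coordinates only on the \<open>Q\<close>-factor, so \<open>\<Phi>\<^sub>T S\<close> is again a product cube. Interpolating
  over the first \<open>k\<close> coordinates of a product cube just replaces the \<open>P\<close>-factor by its own
  interpolant, a scalar polynomial; hence every interpolant of \<open>\<Phi>\<^sub>T S\<close> is the product of an
  interpolant of a flip of \<open>P\<close> and one of a flip of \<open>Q\<close>. Both standardness and having only
  nonpositive real zeros are preserved under products.\<close>

definition cube_prod :: "nat \<Rightarrow> cube \<Rightarrow> cube \<Rightarrow> cube" where
  "cube_prod k P Q = (\<lambda>\<gamma>. P (take k \<gamma>) * Q (drop k \<gamma>))"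

text \<open>The flip identities for product cubes hold only on words of the right length, since
  \<open>flip i\<close> reads the unspecified \<open>\<alpha> ! i\<close> on shorter words.\<close>

definition cube_agree :: "nat \<Rightarrow> cube \<Rightarrow> cube \<Rightarrow> bool" where
  "cube_agree n F G \<longleftrightarrow> (\<forall>\<alpha>. length \<alpha> = n \<longrightarrow> F \<alpha> = G \<alpha>)"

lemma cube_agree_trans: "cube_agree n F G \<Longrightarrow> cube_agree n G H \<Longrightarrow> cube_agree n F H"
  by (simp add: cube_agree_def)

lemma fold_flip_cube_agree:
  "cube_agree n F G \<Longrightarrow> cube_agree n (fold flip xs F) (fold flip xs G)"
  by (induction xs arbitrary: F G) (auto simp: cube_agree_def flip_def)

lemma flip_cube_prod_left:
  assumes "i < k"
  shows "cube_agree (k + l) (flip i (cube_prod k P Q)) (cube_prod k (flip i P) Q)"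
  unfolding cube_agree_def
proof (intro allI impI)
  fix \<gamma> :: "bool list"
  have "take k (\<gamma>[i := v]) = (take k \<gamma>)[i := v]" "drop k (\<gamma>[i := v]) = drop k \<gamma>" for v
    using assms by (simp_all add: take_update_swap)
  moreover have "take k \<gamma> ! i = \<gamma> ! i" using assms by simp
  ultimately show "flip i (cube_prod k P Q) \<gamma> = cube_prod k (flip i P) Q \<gamma>"
    by (simp add: flip_def cube_prod_def mult.assoc)
qed

lemma flip_cube_prod_right:
  assumes "k \<le> i"
  shows "cube_agree (k + l) (flip i (cube_prod k P Q)) (cube_prod k P (flip (i - k) Q))"
  unfolding cube_agree_def
proof (intro allI impI)
  fix \<gamma> :: "bool list" assume "length \<gamma> = k + l"
  have "take k (\<gamma>[i := v]) = take k \<gamma>" "drop k (\<gamma>[i := v]) = (drop k \<gamma>)[i - k := v]" for v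
    using assms by (simp_all add: drop_update_swap)
  moreover have "drop k \<gamma> ! (i - k) = \<gamma> ! i" using assms \<open>length \<gamma> = k + l\<close> by simp
  ultimately show "flip i (cube_prod k P Q) \<gamma> = cube_prod k P (flip (i - k) Q) \<gamma>"
    by (simp add: flip_def cube_prod_def mult_ac)
qed

lemma fold_flip_cube_prod:
  "cube_agree (k + l) (fold flip xs (cube_prod k P Q))
     (cube_prod k (fold flip (filter (\<lambda>i. i < k) xs) P)
                  (fold flip (map (\<lambda>i. i - k) (filter (\<lambda>i. k \<le> i) xs)) Q))"
proof (induction xs arbitrary: P Q)
  case Nil
  then show ?case by (simp add: cube_agree_def)
next
  case (Cons i xs)
  show ?case
  proof (cases "i < k")
    case True
    have "cube_agree (k + l) (fold flip xs (flip i (cube_prod k P Q)))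
        (fold flip xs (cube_prod k (flip i P) Q))"
      using True by (intro fold_flip_cube_agree flip_cube_prod_left)
    with Cons.IH[of "flip i P" Q] True show ?thesis by (auto intro: cube_agree_trans)
  next
    case False
    have "cube_agree (k + l) (fold flip xs (flip i (cube_prod k P Q)))
        (fold flip xs (cube_prod k P (flip (i - k) Q)))"
      using False by (intro fold_flip_cube_agree flip_cube_prod_right) simp
    with Cons.IH[of P "flip (i - k) Q"] False show ?thesis by (auto intro: cube_agree_trans)
  qed
qed

lemma filter_sorted_list_of_set:
  assumes "finite A"
  shows "filter P (sorted_list_of_set A) = sorted_list_of_set {x \<in> A. P x}"
proof -
  have "set (filter P (sorted_list_of_set A)) = {x \<in> A. P x}" using assms by auto
  moreover have "sorted (filter P (sorted_list_of_set A))" by (rule sorted_wrt_filter) simp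
  ultimately show ?thesis
    by (metis distinct_filter distinct_sorted_list_of_set
        sorted_list_of_set.idem_if_sorted_distinct)
qed

lemma map_diff_sorted_list_of_set:
  fixes A :: "nat set"
  assumes "finite A" and "\<forall>i\<in>A. k \<le> i"
  shows "map (\<lambda>i. i - k) (sorted_list_of_set A) = sorted_list_of_set ((\<lambda>i. i - k) ` A)"
proof -
  have "inj_on (\<lambda>i. i - k) A"
    using assms(2) unfolding inj_on_def by (metis le_add_diff_inverse)
  moreover have "sorted (map (\<lambda>i. i - k) (sorted_list_of_set A))"
    unfolding sorted_map by (rule sorted_wrt_mono_rel[OF _ sorted_sorted_list_of_set]) (simp add: diff_le_mono)
  ultimately show ?thesis
    using assms(1)
    by (metis distinct_map distinct_sorted_list_of_set set_map set_sorted_list_of_set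
        sorted_list_of_set.idem_if_sorted_distinct)
qed

lemma flipS_cube_prod:
  assumes "finite T"
  shows "cube_agree (k + l) (flipS T (cube_prod k P Q))
     (cube_prod k (flipS {i \<in> T. i < k} P) (flipS ((\<lambda>i. i - k) ` {i \<in> T. k \<le> i}) Q))"
proof -
  have "map (\<lambda>i. i - k) (filter (\<lambda>i. k \<le> i) (sorted_list_of_set T))
      = sorted_list_of_set ((\<lambda>i. i - k) ` {i \<in> T. k \<le> i})"
    using assms by (simp add: filter_sorted_list_of_set map_diff_sorted_list_of_set)
  then show ?thesis
    using fold_flip_cube_prod[of k l "sorted_list_of_set T" P Q] assms
    by (simp add: flipS_def filter_sorted_list_of_set)
qed

lemma interp_cube_agree:
  "length lam = n \<Longrightarrow> length rho = n \<Longrightarrow> cube_agree (n + m) F G \<Longrightarrow>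
   cube_agree m (interp lam rho F) (interp lam rho G)"
proof (induction lam arbitrary: n rho F G)
  case Nil
  then show ?case by simp
next
  case (Cons a lam)
  then obtain r rs where rho: "rho = r # rs" by (cases rho) auto
  have "cube_agree (n - 1 + m) (interp1 a r F) (interp1 a r G)"
    using Cons.prems by (auto simp: cube_agree_def interp1_def)
  then show ?case using Cons rho by (cases n) auto
qed

lemma interp_append:
  "length lam1 = length rho1 \<Longrightarrow>
   interp (lam1 @ lam2) (rho1 @ rho2) F = interp lam2 rho2 (interp lam1 rho1 F)"
proof (induction lam1 arbitrary: rho1 F)
  case Nil
  then show ?case by simp
next
  case (Cons a lam1)
  then show ?case by (cases rho1) auto
qed

lemma interp_cube_prod:
  "length lam = k \<Longrightarrow> length rho = k \<Longrightarrow>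
   interp lam rho (cube_prod k P Q) = (\<lambda>\<gamma>. interp lam rho P [] * Q \<gamma>)"
proof (induction lam arbitrary: k rho P)
  case Nil
  then show ?case by (simp add: cube_prod_def)
next
  case (Cons a lam)
  then obtain r rs where rho: "rho = r # rs" by (cases rho) auto
  have "interp1 a r (cube_prod k P Q) = cube_prod (k - 1) (interp1 a r P) Q"
    using Cons.prems
    by (cases k) (auto simp: cube_prod_def interp1_def fun_eq_iff algebra_simps)
  then show ?case using Cons rho by simp
qed

lemma interp_mult_left:
  "interp lam rho (\<lambda>\<gamma>. c * Q \<gamma>) = (\<lambda>\<gamma>. c * interp lam rho Q \<gamma>)"
proof (induction lam rho Q rule: interp.induct)
  case (1 l ls r rs P)
  have "interp1 l r (\<lambda>\<gamma>. c * P \<gamma>) = (\<lambda>\<gamma>. c * interp1 l r P \<gamma>)"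
    by (auto simp: interp1_def fun_eq_iff algebra_simps)
  then show ?case using 1 by simp
qed auto

lemma interp_flipS_cube_prod:
  assumes "length lam = k + l" and "length rho = k + l" and "finite T"
  shows "interp lam rho (flipS T (cube_prod k P Q)) [] =
    interp (take k lam) (take k rho) (flipS {i \<in> T. i < k} P) [] *
    interp (drop k lam) (drop k rho) (flipS ((\<lambda>i. i - k) ` {i \<in> T. k \<le> i}) Q) []"
    (is "_ = interp ?lam1 ?rho1 ?P' [] * interp ?lam2 ?rho2 ?Q' []")
proof -
  have "interp lam rho (flipS T (cube_prod k P Q)) [] = interp lam rho (cube_prod k ?P' ?Q') []"
    using interp_cube_agree[of lam "k + l" rho 0] flipS_cube_prod[OF assms(3)] assms(1,2)
    by (simp add: cube_agree_def)
  also have "\<dots> = interp ?lam2 ?rho2 (interp ?lam1 ?rho1 (cube_prod k ?P' ?Q')) []"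
    using interp_append[of ?lam1 ?rho1 ?lam2 ?rho2] assms(1,2) by simp
  also have "\<dots> = interp ?lam1 ?rho1 ?P' [] * interp ?lam2 ?rho2 ?Q' []"
    using assms(1,2) by (simp add: interp_cube_prod interp_mult_left)
  finally show ?thesis .
qed

lemma standard_mult: "standard p \<Longrightarrow> standard q \<Longrightarrow> standard (p * q)"
  by (auto simp: standard_def lead_coeff_mult)

lemma map_poly_of_real_mult:
  "map_poly (of_real :: real \<Rightarrow> 'a :: {real_algebra_1, comm_semiring_0}) (p * q) =
     map_poly of_real p * map_poly of_real q"
  by (rule poly_eqI) (simp add: coeff_map_poly coeff_mult)

lemma nonpos_zeros_mult: "nonpos_zeros p \<Longrightarrow> nonpos_zeros q \<Longrightarrow> nonpos_zeros (p * q)"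
  by (auto simp: nonpos_zeros_def map_poly_of_real_mult)

theorem lemma4p6:
  fixes k l :: nat and P Q :: cube
  assumes "interpolatory_cube k P" and "interpolatory_cube l Q"
  shows "interpolatory_cube (k + l) (\<lambda>\<gamma>. P (take k \<gamma>) * Q (drop k \<gamma>))"
  unfolding interpolatory_cube_def cube_prod_def[symmetric]
proof (intro allI impI, elim conjE)
  fix lam rho :: "real list" and T :: "nat set"
  assume len: "length lam = k + l" "length rho = k + l"
    and pos: "\<forall>x\<in>set lam. x > 0" "\<forall>x\<in>set rho. x > 0" and T: "T \<subseteq> {..<k + l}"
  let ?T1 = "{i \<in> T. i < k}" and ?T2 = "(\<lambda>i. i - k) ` {i \<in> T. k \<le> i}"
  have "finite T" using T finite_subset by blast
  have "?T1 \<subseteq> {..<k}" "?T2 \<subseteq> {..<l}" using T by auto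
  moreover have "\<forall>x\<in>set (take k lam) \<union> set (drop k lam) \<union> set (take k rho) \<union> set (drop k rho). x > 0"
    using pos by (auto dest: in_set_takeD in_set_dropD)
  ultimately have "standard (interp (take k lam) (take k rho) (flipS ?T1 P) []) \<and>
      nonpos_zeros (interp (take k lam) (take k rho) (flipS ?T1 P) [])"
    "standard (interp (drop k lam) (drop k rho) (flipS ?T2 Q) []) \<and>
      nonpos_zeros (interp (drop k lam) (drop k rho) (flipS ?T2 Q) [])"
    using assms len unfolding interpolatory_cube_def by simp_all
  then show "standard (interp lam rho (flipS T (cube_prod k P Q)) []) \<and>
      nonpos_zeros (interp lam rho (flipS T (cube_prod k P Q)) [])"
    using interp_flipS_cube_prod[OF len \<open>finite T\<close>] standard_mult nonpos_zeros_mult by simp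
qed

end
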